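(* Let $P$ be a finite up-regular order and let $R$ be its relatively maximum full trunk (which exists). Then $\mathrm{Height}(P\setminus R)\le \tfrac12\,\mathrm{Height}(P)$, where $P\setminus R$ denotes the induced suborder on $\mathrm{Dom}(P)\setminus R$.
   Context: Orders are partial orders; $x\sim y$ means $x\ne y$ and $x,y$ incomparable. For a finite order $Q$, $\mathrm{Height}(Q)$ is the maximum cardinality of a chain of $Q$ (0 if $Q$ is empty), and $\mathrm{Level}(x)=\sup\{\mathrm{Level}(y)+1:y<x\}$. An element $x$ of $P$ is up-regular if for all $y,z$ with $\mathrm{Level}(x)<\mathrm{Level}(y)=\mathrm{Level}(z)$ we have $x<y\iff x<z$; $P$ is up-regular if all its elements are. A trunk of $P$ is a subset $T$ such that for pairwise distinct $x,y,z\in T$, $x\sim y$ and $y\sim z$ imply $x\sim z$. A chain is maximum if it has maximum cardinality; a full trunk is a trunk containing a maximum chain; the relatively maximum full trunk is the full trunk that is the unique inclusion-maximal full trunk. *)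

theory Defs
  imports Main
begin

text \<open>A finite order is represented by a carrier set A (its domain) together with a
relation le that is a partial order on A.  Suborders are induced suborders on
subsets of A.\<close>

definition partial_order_on' :: "'a set \<Rightarrow> ('a \<Rightarrow> 'a \<Rightarrow> bool) \<Rightarrow> bool" where
  "partial_order_on' A le \<longleftrightarrow>
     (\<forall>x\<in>A. le x x) \<and>
     (\<forall>x\<in>A. \<forall>y\<in>A. le x y \<and> le y x \<longrightarrow> x = y) \<and>
     (\<forall>x\<in>A. \<forall>y\<in>A. \<forall>z\<in>A. le x y \<and> le y z \<longrightarrow> le x z)"

definition lt :: "('a \<Rightarrow> 'a \<Rightarrow> bool) \<Rightarrow> 'a \<Rightarrow> 'a \<Rightarrow> bool" where
  "lt le x y \<longleftrightarrow> le x y \<and> x \<noteq> y"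

definition incomp :: "('a \<Rightarrow> 'a \<Rightarrow> bool) \<Rightarrow> 'a \<Rightarrow> 'a \<Rightarrow> bool" where
  "incomp le x y \<longleftrightarrow> x \<noteq> y \<and> \<not> le x y \<and> \<not> le y x"

definition is_chain :: "('a \<Rightarrow> 'a \<Rightarrow> bool) \<Rightarrow> 'a set \<Rightarrow> bool" where
  "is_chain le C \<longleftrightarrow> (\<forall>x\<in>C. \<forall>y\<in>C. le x y \<or> le y x)"

definition height :: "('a \<Rightarrow> 'a \<Rightarrow> bool) \<Rightarrow> 'a set \<Rightarrow> nat" where
  "height le S = Max {card C | C. C \<subseteq> S \<and> is_chain le C}"

text \<open>Level(x) = sup {Level(y)+1 : y < x} (sup of the empty set = 0), defined by
well-founded recursion along the strict order of P.\<close>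
definition level :: "'a set \<Rightarrow> ('a \<Rightarrow> 'a \<Rightarrow> bool) \<Rightarrow> 'a \<Rightarrow> nat" where
  "level A le = wfrec {(y, x). y \<in> A \<and> x \<in> A \<and> lt le y x}
                  (\<lambda>f x. Sup ((\<lambda>y. f y + 1) ` {y \<in> A. lt le y x}))"

definition up_regular_elem :: "'a set \<Rightarrow> ('a \<Rightarrow> 'a \<Rightarrow> bool) \<Rightarrow> 'a \<Rightarrow> bool" where
  "up_regular_elem A le x \<longleftrightarrow>
     (\<forall>y\<in>A. \<forall>z\<in>A. level A le x < level A le y \<and> level A le y = level A le z
        \<longrightarrow> (lt le x y \<longleftrightarrow> lt le x z))"

definition up_regular :: "'a set \<Rightarrow> ('a \<Rightarrow> 'a \<Rightarrow> bool) \<Rightarrow> bool" where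
  "up_regular A le \<longleftrightarrow> (\<forall>x\<in>A. up_regular_elem A le x)"

definition is_trunk :: "'a set \<Rightarrow> ('a \<Rightarrow> 'a \<Rightarrow> bool) \<Rightarrow> 'a set \<Rightarrow> bool" where
  "is_trunk A le T \<longleftrightarrow> T \<subseteq> A \<and>
     (\<forall>x\<in>T. \<forall>y\<in>T. \<forall>z\<in>T. x \<noteq> y \<and> y \<noteq> z \<and> x \<noteq> z \<and> incomp le x y \<and> incomp le y z
        \<longrightarrow> incomp le x z)"

definition maximum_chain :: "'a set \<Rightarrow> ('a \<Rightarrow> 'a \<Rightarrow> bool) \<Rightarrow> 'a set \<Rightarrow> bool" where
  "maximum_chain A le C \<longleftrightarrow> C \<subseteq> A \<and> is_chain le C \<and> card C = height le A"

definition full_trunk :: "'a set \<Rightarrow> ('a \<Rightarrow> 'a \<Rightarrow> bool) \<Rightarrow> 'a set \<Rightarrow> bool" where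
  "full_trunk A le T \<longleftrightarrow> is_trunk A le T \<and> (\<exists>C. maximum_chain A le C \<and> C \<subseteq> T)"

definition maximal_full_trunk :: "'a set \<Rightarrow> ('a \<Rightarrow> 'a \<Rightarrow> bool) \<Rightarrow> 'a set \<Rightarrow> bool" where
  "maximal_full_trunk A le T \<longleftrightarrow> full_trunk A le T \<and>
     (\<forall>T'. full_trunk A le T' \<and> T \<subseteq> T' \<longrightarrow> T' = T)"

definition rel_max_full_trunk :: "'a set \<Rightarrow> ('a \<Rightarrow> 'a \<Rightarrow> bool) \<Rightarrow> 'a set \<Rightarrow> bool" where
  "rel_max_full_trunk A le R \<longleftrightarrow> maximal_full_trunk A le R \<and>
     (\<forall>T. maximal_full_trunk A le T \<longrightarrow> T = R)"

end

theory Submission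
  imports Defs
begin

text \<open>Let M be the union of all maximum chains. Any element x of a full trunk T lies in M:
if C \<subseteq> T is a maximum chain and c \<in> C has the level of x, then x is incomparable to c,
so by the trunk property x is comparable to all of C - {c}, and exchanging c for x gives
another maximum chain. Under up-regularity an element of M lies below every element of
higher level, so two elements of M are incomparable exactly when they share a level; hence
M is a full trunk containing every full trunk, i.e. the relatively maximum one. Finally, an
element x outside M has level at most h - 2 (h the height) and lies below no element of
level lv x + 1, since otherwise a chain up to x, continued along a maximum chain, would be
maximum. So in a chain outside M the levels are pairwise non-adjacent numbers below h - 1,
and there are at most h/2 of them.\<close>

lemma finite_chain_cards: "finite B \<Longrightarrow> finite {card C |C. C \<subseteq> B \<and> is_chain le C}"
  by (rule finite_subset[of _ "card ` Pow B"]) auto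

lemma card_le_height: "finite B \<Longrightarrow> C \<subseteq> B \<Longrightarrow> is_chain le C \<Longrightarrow> card C \<le> height le B"
  unfolding height_def by (rule Max_ge[OF finite_chain_cards]) auto

lemma height_attained: "finite B \<Longrightarrow> \<exists>C\<subseteq>B. is_chain le C \<and> card C = height le B"
proof -
  assume "finite B"
  have "{} \<subseteq> B \<and> is_chain le {}" by (simp add: is_chain_def)
  hence "{card C |C. C \<subseteq> B \<and> is_chain le C} \<noteq> {}" by blast
  hence "height le B \<in> {card C |C. C \<subseteq> B \<and> is_chain le C}"
    unfolding height_def using Max_in[OF finite_chain_cards[OF \<open>finite B\<close>]] by blast
  thus ?thesis by auto
qed

locale finite_poset =
  fixes A :: "'a set" and le :: "'a \<Rightarrow> 'a \<Rightarrow> bool"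
  assumes finite_carrier: "finite A" and partial_order: "partial_order_on' A le"
begin

abbreviation "lv \<equiv> level A le"
abbreviation "ht \<equiv> height le A"

lemma refl: "x \<in> A \<Longrightarrow> le x x"
  using partial_order unfolding partial_order_on'_def by blast

lemma antisym: "x \<in> A \<Longrightarrow> y \<in> A \<Longrightarrow> le x y \<Longrightarrow> le y x \<Longrightarrow> x = y"
  using partial_order unfolding partial_order_on'_def by blast

lemma trans: "x \<in> A \<Longrightarrow> y \<in> A \<Longrightarrow> z \<in> A \<Longrightarrow> le x y \<Longrightarrow> le y z \<Longrightarrow> le x z"
  using partial_order unfolding partial_order_on'_def by blast

lemma chain_lt_cases:
  "is_chain le C \<Longrightarrow> c \<in> C \<Longrightarrow> d \<in> C \<Longrightarrow> c \<noteq> d \<Longrightarrow> lt le c d \<or> lt le d c"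
  unfolding is_chain_def lt_def by blast

lemma chain_union_through:
  assumes "D \<subseteq> A" "E \<subseteq> A" "x \<in> A" "is_chain le D" "is_chain le E"
    and "\<forall>d\<in>D. le d x" "\<forall>e\<in>E. le x e"
  shows "is_chain le (D \<union> E)"
  using assms trans unfolding is_chain_def by (metis Un_iff subsetD)

lemma wf_strict_order: "wf {(y, x). y \<in> A \<and> x \<in> A \<and> lt le y x}"
proof (rule finite_acyclic_wf)
  show "finite {(y, x). y \<in> A \<and> x \<in> A \<and> lt le y x}"
    by (rule finite_subset[of _ "A \<times> A"]) (auto simp: finite_carrier)
  have "trans {(y, x). y \<in> A \<and> x \<in> A \<and> lt le y x}"
    unfolding trans_def lt_def using trans antisym by blast
  moreover have "irrefl {(y, x). y \<in> A \<and> x \<in> A \<and> lt le y x}"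
    unfolding irrefl_def lt_def by blast
  ultimately show "acyclic {(y, x). y \<in> A \<and> x \<in> A \<and> lt le y x}"
    unfolding acyclic_irrefl by (simp add: trancl_id)
qed

lemma level_eq: "x \<in> A \<Longrightarrow> lv x = Sup ((\<lambda>y. lv y + 1) ` {y \<in> A. lt le y x})"
  unfolding level_def
  by (subst wfrec[OF wf_strict_order]) (auto intro!: arg_cong[where f = Sup] image_cong simp: cut_apply)

lemma level_less: "x \<in> A \<Longrightarrow> y \<in> A \<Longrightarrow> lt le y x \<Longrightarrow> lv y < lv x"
proof -
  assume "x \<in> A" "y \<in> A" "lt le y x"
  hence "lv y + 1 \<le> Sup ((\<lambda>y. lv y + 1) ` {y \<in> A. lt le y x})"
    using finite_carrier by (intro le_cSup_finite) auto
  thus ?thesis using level_eq[OF \<open>x \<in> A\<close>] by simp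
qed

lemma level_Suc_witness: "x \<in> A \<Longrightarrow> lv x = Suc m \<Longrightarrow> \<exists>y\<in>A. lt le y x \<and> lv y = m"
proof -
  assume x: "x \<in> A" "lv x = Suc m"
  define S where "S = (\<lambda>y. lv y + 1) ` {y \<in> A. lt le y x}"
  have "lv x = Sup S" using level_eq[OF x(1)] by (simp add: S_def)
  hence "S \<noteq> {}" using x by auto
  moreover have "finite S" using finite_carrier by (simp add: S_def)
  ultimately have "Sup S \<in> S" by (simp add: Sup_nat_def)
  thus ?thesis using \<open>lv x = Sup S\<close> x by (auto simp: S_def)
qed

lemma level_eq_incomp: "x \<in> A \<Longrightarrow> y \<in> A \<Longrightarrow> x \<noteq> y \<Longrightarrow> lv x = lv y \<Longrightarrow> incomp le x y"
  using level_less[of x y] level_less[of y x] unfolding incomp_def lt_def by auto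

lemma chain_down_to:
  "x \<in> A \<Longrightarrow> \<exists>D\<subseteq>A. is_chain le D \<and> x \<in> D \<and> (\<forall>d\<in>D. le d x) \<and> lv ` D = {..lv x}"
proof (induction "lv x" arbitrary: x)
  case 0
  show ?case
    by (rule exI[of _ "{x}"]) (use 0 refl in \<open>auto simp: is_chain_def\<close>)
next
  case (Suc m)
  obtain y where y: "y \<in> A" "lt le y x" "lv y = m" using level_Suc_witness Suc by metis
  obtain D where D: "D \<subseteq> A" "is_chain le D" "y \<in> D" "\<forall>d\<in>D. le d y" "lv ` D = {..lv y}"
    using Suc(1)[of y] y by metis
  have below: "\<forall>d\<in>D. le d x" using D y Suc(3) trans unfolding lt_def by blast
  show ?case
  proof (rule exI[of _ "insert x D"], intro conjI)
    show "is_chain le (insert x D)" using D(2) below refl Suc(3) unfolding is_chain_def by blast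
    show "lv ` insert x D = {..lv x}" using D(5) y Suc(2)[symmetric] by (auto simp: atMost_Suc)
  qed (use D below Suc refl in auto)
qed

lemma inj_on_level_chain:
  assumes "is_chain le C" "C \<subseteq> A"
  shows "inj_on lv C"
proof (rule inj_onI, rule ccontr)
  fix c d assume cd: "c \<in> C" "d \<in> C" "lv c = lv d" "c \<noteq> d"
  hence "lt le c d \<or> lt le d c" using chain_lt_cases[OF assms(1)] by blast
  thus False using level_less[of d c] level_less[of c d] cd assms(2) by auto
qed

lemma level_less_height: "x \<in> A \<Longrightarrow> lv x < ht"
proof -
  assume "x \<in> A"
  then obtain D where D: "D \<subseteq> A" "is_chain le D" "lv ` D = {..lv x}"
    using chain_down_to[of x] by blast
  have "card (lv ` D) \<le> card D" using D finite_carrier by (meson card_image_le finite_subset)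
  also have "\<dots> \<le> ht" using card_le_height[OF finite_carrier D(1,2)] .
  finally show ?thesis using D(3) by simp
qed

lemma maximum_chain_exists: "\<exists>C. maximum_chain A le C"
  using height_attained[OF finite_carrier] unfolding maximum_chain_def by blast

lemma maximum_chainI:
  assumes "C \<subseteq> A" "is_chain le C" "{..<ht} \<subseteq> lv ` C"
  shows "maximum_chain A le C"
proof -
  have "finite C" using assms(1) finite_carrier finite_subset by blast
  hence "ht \<le> card (lv ` C)" using card_mono[OF finite_imageI assms(3)] by simp
  also have "\<dots> \<le> card C" using card_image_le[OF \<open>finite C\<close>] .
  finally show ?thesis
    using card_le_height[OF finite_carrier assms(1,2)] assms unfolding maximum_chain_def by simp
qed

lemma maximum_chain_levels: "maximum_chain A le C \<Longrightarrow> lv ` C = {..<ht}"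
proof -
  assume "maximum_chain A le C"
  hence C: "C \<subseteq> A" "is_chain le C" "card C = ht" unfolding maximum_chain_def by auto
  have "lv ` C \<subseteq> {..<ht}" using C level_less_height by auto
  moreover have "card (lv ` C) = card {..<ht}"
    using card_image[OF inj_on_level_chain[OF C(2,1)]] C by simp
  ultimately show ?thesis using card_subset_eq by blast
qed

lemma maximum_chain_meets_level:
  "maximum_chain A le C \<Longrightarrow> x \<in> A \<Longrightarrow> \<exists>c\<in>C. lv c = lv x"
  using maximum_chain_levels level_less_height by (metis imageE lessThan_iff)

definition max_chain_union :: "'a set" where
  "max_chain_union = {x \<in> A. \<exists>C. maximum_chain A le C \<and> x \<in> C}"

lemma max_chain_union_subset: "max_chain_union \<subseteq> A"
  unfolding max_chain_union_def by blast

lemma maximum_chain_subset_max_chain_union: "maximum_chain A le C \<Longrightarrow> C \<subseteq> max_chain_union"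
  unfolding max_chain_union_def maximum_chain_def by auto

lemma full_trunk_subset_max_chain_union:
  assumes T: "full_trunk A le T"
  shows "T \<subseteq> max_chain_union"
proof
  fix x assume "x \<in> T"
  obtain C where C: "maximum_chain A le C" "C \<subseteq> T" and trunk: "is_trunk A le T"
    using T unfolding full_trunk_def by blast
  have CA: "C \<subseteq> A" "is_chain le C" using C unfolding maximum_chain_def by auto
  have x: "x \<in> A" using \<open>x \<in> T\<close> trunk unfolding is_trunk_def by blast
  show "x \<in> max_chain_union"
  proof (cases "x \<in> C")
    case True thus ?thesis using C maximum_chain_subset_max_chain_union by blast
  next
    case False
    obtain c where c: "c \<in> C" "lv c = lv x" using maximum_chain_meets_level[OF C(1) x] by blast
    have "c \<noteq> x" using c False by blast
    hence xc: "incomp le x c" using level_eq_incomp[OF x] c CA by auto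
    have comparable: "le d x \<or> le x d" if d: "d \<in> C" "d \<noteq> c" for d
    proof (rule ccontr)
      assume "\<not> (le d x \<or> le x d)"
      hence "incomp le d x" using d False unfolding incomp_def by blast
      hence "incomp le d c"
        using trunk xc d c C(2) \<open>x \<in> T\<close> \<open>c \<noteq> x\<close> unfolding is_trunk_def by (metis subsetD)
      thus False using CA(2) d c unfolding is_chain_def incomp_def by blast
    qed
    define C' where "C' = insert x (C - {c})"
    have "is_chain le C'"
      using CA(2) comparable refl[OF x] unfolding C'_def is_chain_def by (metis DiffE insertE singletonI)
    moreover have "{..<ht} \<subseteq> lv ` C'"
      using maximum_chain_levels[OF C(1)] c unfolding C'_def by auto
    moreover have "C' \<subseteq> A" using CA x unfolding C'_def by blast
    ultimately show ?thesis
      using maximum_chainI maximum_chain_subset_max_chain_union unfolding C'_def by blast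
  qed
qed

lemma below_next_level_in_max_chain_union:
  assumes x: "x \<in> A" and C: "maximum_chain A le C" "c \<in> C"
    and xc: "lt le x c" and level_c: "lv c = Suc (lv x)"
  shows "x \<in> max_chain_union"
proof -
  obtain D where D: "D \<subseteq> A" "is_chain le D" "x \<in> D" "\<forall>d\<in>D. le d x" "lv ` D = {..lv x}"
    using chain_down_to[OF x] by blast
  have CA: "C \<subseteq> A" "is_chain le C" using C unfolding maximum_chain_def by auto
  define E where "E = {c' \<in> C. lv x < lv c'}"
  have above: "le x c'" if "c' \<in> E" for c'
  proof -
    have "c' = c \<or> lt le c c' \<or> lt le c' c" using chain_lt_cases[OF CA(2)] that C(2) E_def by blast
    moreover have "\<not> lt le c' c" using level_less[of c c'] that C(2) CA(1) level_c E_def by auto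
    moreover have "c' \<in> A" using that CA(1) unfolding E_def by blast
    ultimately show ?thesis using xc trans[of x c c'] C(2) CA(1) x unfolding lt_def by blast
  qed
  have "E \<subseteq> A" "is_chain le E" using CA unfolding E_def is_chain_def by auto
  hence "is_chain le (D \<union> E)" using chain_union_through[OF D(1) _ x D(2)] above D(4) by blast
  moreover have "{..<ht} \<subseteq> lv ` (D \<union> E)"
  proof
    fix k assume k: "k \<in> {..<ht}"
    show "k \<in> lv ` (D \<union> E)"
    proof (cases "k \<le> lv x")
      case True thus ?thesis using D(5) by auto
    next
      case False
      obtain c' where "c' \<in> C" "lv c' = k" using maximum_chain_levels[OF C(1)] k by (metis imageE)
      thus ?thesis using False unfolding E_def by force
    qed
  qed
  moreover have "D \<union> E \<subseteq> A" using D CA unfolding E_def by blast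
  ultimately show ?thesis using maximum_chainI maximum_chain_subset_max_chain_union D(3) by blast
qed

lemma top_levels_in_max_chain_union: "x \<in> A \<Longrightarrow> ht \<le> Suc (lv x) \<Longrightarrow> x \<in> max_chain_union"
proof -
  assume x: "x \<in> A" "ht \<le> Suc (lv x)"
  obtain D where D: "D \<subseteq> A" "is_chain le D" "x \<in> D" "lv ` D = {..lv x}"
    using chain_down_to[OF x(1)] by blast
  have "{..<ht} \<subseteq> lv ` D" using D(4) x(2) by auto
  thus ?thesis using maximum_chainI D maximum_chain_subset_max_chain_union by blast
qed

end

locale up_regular_poset = finite_poset +
  assumes up_regular: "up_regular A le"
begin

lemma up_regularD:
  "x \<in> A \<Longrightarrow> y \<in> A \<Longrightarrow> z \<in> A \<Longrightarrow> lv x < lv y \<Longrightarrow> lv y = lv z \<Longrightarrow> lt le x y \<Longrightarrow> lt le x z"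
  using up_regular unfolding up_regular_def up_regular_elem_def by blast

lemma max_chain_union_lt:
  assumes x: "x \<in> max_chain_union" and y: "y \<in> A" "lv x < lv y"
  shows "lt le x y"
proof -
  obtain C where C: "maximum_chain A le C" "x \<in> C" and "x \<in> A"
    using x unfolding max_chain_union_def by blast
  have CA: "C \<subseteq> A" "is_chain le C" using C unfolding maximum_chain_def by auto
  obtain c where c: "c \<in> C" "lv c = lv y" using maximum_chain_meets_level[OF C(1) y(1)] by blast
  have "lt le x c \<or> lt le c x" using chain_lt_cases[OF CA(2)] c C y by fastforce
  moreover have "\<not> lt le c x" using level_less[of x c] c CA y \<open>x \<in> A\<close> by auto
  ultimately show ?thesis using up_regularD[of x c y] c CA y \<open>x \<in> A\<close> by auto
qed

lemma max_chain_union_incomp_iff: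
  assumes "x \<in> max_chain_union" "y \<in> max_chain_union" "x \<noteq> y"
  shows "incomp le x y \<longleftrightarrow> lv x = lv y"
proof
  assume "incomp le x y"
  thus "lv x = lv y"
    using max_chain_union_lt[of x y] max_chain_union_lt[of y x] assms max_chain_union_subset
    unfolding incomp_def lt_def by (metis linorder_neqE_nat subsetD)
next
  assume "lv x = lv y"
  thus "incomp le x y" using level_eq_incomp assms max_chain_union_subset by blast
qed

lemma full_trunk_max_chain_union: "full_trunk A le max_chain_union"
proof -
  have "is_trunk A le max_chain_union"
    unfolding is_trunk_def using max_chain_union_subset max_chain_union_incomp_iff by metis
  moreover obtain C where "maximum_chain A le C" using maximum_chain_exists by blast
  ultimately show ?thesis unfolding full_trunk_def using maximum_chain_subset_max_chain_union by blast
qed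

lemma rel_max_full_trunk_max_chain_union: "rel_max_full_trunk A le max_chain_union"
  unfolding rel_max_full_trunk_def maximal_full_trunk_def
  using full_trunk_max_chain_union full_trunk_subset_max_chain_union by blast

lemma outside_not_below_next_level:
  assumes x: "x \<in> A" "x \<notin> max_chain_union" and y: "y \<in> A" "lv y = Suc (lv x)"
  shows "\<not> lt le x y"
proof
  assume "lt le x y"
  obtain C where C: "maximum_chain A le C" using maximum_chain_exists by blast
  then obtain c where c: "c \<in> C" "lv c = lv y" using maximum_chain_meets_level y(1) by blast
  have "lt le x c"
    using up_regularD[of x y c] \<open>lt le x y\<close> x y c C unfolding maximum_chain_def by auto
  thus False using below_next_level_in_max_chain_union[OF x(1) C c(1)] c y x(2) by simp
qed

lemma card_chain_outside_max_chain_union: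
  assumes D: "D \<subseteq> A - max_chain_union" "is_chain le D"
  shows "2 * card D \<le> ht"
proof -
  have DA: "D \<subseteq> A" using D by blast
  \<comment> \<open>each element x of D accounts for the two levels lv x and lv x + 1\<close>
  define g where "g = (\<lambda>(x, b::nat). lv x + b)"
  have apart: "Suc (lv u) < lv v" if "u \<in> D" "v \<in> D" "lt le u v" for u v
  proof -
    have "u \<in> A" "v \<in> A" "u \<notin> max_chain_union" using that D by auto
    hence "lv u < lv v" "lv v \<noteq> Suc (lv u)"
      using level_less[of v u] outside_not_below_next_level[of u v] that(3) by auto
    thus ?thesis by linarith
  qed
  have pair_eq: "(x, b) = (y, b')"
    if xb: "(x, b) \<in> D \<times> {0, 1}" and yb: "(y, b') \<in> D \<times> {0, 1}" and eq: "g (x, b) = g (y, b')"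
    for x b y b'
  proof -
    have "x = y"
    proof (rule ccontr)
      assume "x \<noteq> y"
      hence "lt le x y \<or> lt le y x" using chain_lt_cases[OF D(2)] xb yb by blast
      thus False using apart[of x y] apart[of y x] xb yb eq unfolding g_def by auto
    qed
    thus ?thesis using eq unfolding g_def by simp
  qed
  have "inj_on g (D \<times> {0, 1})"
    by (rule inj_onI) (metis pair_eq prod.collapse)
  moreover have "g ` (D \<times> {0, 1}) \<subseteq> {..<ht}"
    using top_levels_in_max_chain_union D unfolding g_def by fastforce
  ultimately have "card (D \<times> {0::nat, 1}) \<le> card {..<ht}" using card_inj_on_le by blast
  thus ?thesis using finite_subset[OF DA finite_carrier] by (simp add: card_cartesian_product)
qed

lemma height_outside_max_chain_union: "2 * height le (A - max_chain_union) \<le> ht"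
proof -
  obtain D where D: "D \<subseteq> A - max_chain_union" "is_chain le D"
    "card D = height le (A - max_chain_union)"
    using height_attained finite_carrier by blast
  thus ?thesis using card_chain_outside_max_chain_union[OF D(1,2)] by simp
qed

end

theorem mainTheorem14:
  fixes A :: "'a set" and le :: "'a \<Rightarrow> 'a \<Rightarrow> bool"
  assumes "finite A" and "partial_order_on' A le" and "up_regular A le"
  shows "(\<exists>R. rel_max_full_trunk A le R) \<and>
         (\<forall>R. rel_max_full_trunk A le R \<longrightarrow> 2 * height le (A - R) \<le> height le A)"
proof -
  interpret up_regular_poset A le using assms by unfold_locales
  have M: "rel_max_full_trunk A le max_chain_union"
    by (rule rel_max_full_trunk_max_chain_union)
  moreover have "R = max_chain_union" if "rel_max_full_trunk A le R" for R
    using M that unfolding rel_max_full_trunk_def by blast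
  ultimately show ?thesis using height_outside_max_chain_union by blast
qed

end
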